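(* Let $R$ be a ring with identity, ${}_RM$ a left $R$-module, $\varphi:M\to M$ a nilpotent $R$-endomorphism, and $\{x_{\gamma,i}\mid\gamma\in\Gamma,1\le i\le k_\gamma\}$ a nilpotent Jordan normal base of ${}_RM$ with respect to $\varphi$. Define $\Phi:\coprod_{\gamma\in\Gamma}R[t]\to M$ by $\Phi(\mathbf f)=\sum_{\gamma\in\Gamma}f_\gamma(t)\ast x_{\gamma,1}$ for $\mathbf f=(f_\gamma(t))_{\gamma\in\Gamma}$. Then $\Phi$ is a surjective homomorphism of left $R[t]$-modules, $\varphi(\Phi(\mathbf f))=\Phi(t\mathbf f)$ for all $\mathbf f\in\coprod_{\gamma\in\Gamma}R[t]$, and \[\coprod_{\gamma\in\Gamma}\bigl(J(R)[t]+(t^{k_\gamma})\bigr)\subseteq\ker(\Phi),\] where the left-hand side is the set of $\mathbf f$ in the copower with $f_\gamma(t)\in J(R)[t]+(t^{k_\gamma})$ for every $\gamma$; moreover $\ker(\Phi)$ is a left ideal of the direct power ring $\prod_{\gamma\in\Gamma}R[t]$ (i.e. $\mathbf g\mathbf f\in\ker(\Phi)$ for all $\mathbf g\in\prod_{\gamma}R[t]$ and $\mathbf f\in\ker(\Phi)$), and hence of the copower ring.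
   Context: A nilpotent Jordan normal base of ${}_RM$ with respect to $\varphi$ is a subset $\{x_{\gamma,i}\mid\gamma\in\Gamma,1\le i\le k_\gamma\}$ (integers $k_\gamma\ge1$) such that each $Rx_{\gamma,i}$ is simple, $M=\bigoplus_{\gamma,i}Rx_{\gamma,i}$, $\varphi(x_{\gamma,i})=x_{\gamma,i+1}$ for $1\le i<k_\gamma$, $\varphi(x_{\gamma,k_\gamma})=0$, and $\{k_\gamma\}$ is bounded. $R[t]$ is the polynomial ring in a central (commuting) indeterminate $t$; $J(R)$ is the Jacobson radical and $J(R)[t]$ the polynomials with coefficients in $J(R)$; $(t^k)=R[t]t^k$. $M$ is a left $R[t]$-module via $(a_1+a_2t+\cdots+a_{n+1}t^n)\ast u=a_1u+a_2\varphi(u)+\cdots+a_{n+1}\varphi^n(u)$. The copower $\coprod_{\gamma\in\Gamma}R[t]$ is the ideal of the direct power ring $\prod_{\gamma\in\Gamma}R[t]$ consisting of elements with finitely many nonzero coordinates; $R[t]$ acts on both by left multiplication in each coordinate. *)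

theory Defs
  imports Main
begin

text \<open>The module M is the whole type 'm; the scalar action is smul.\<close>

definition left_module :: "('r::ring_1 \<Rightarrow> 'm::ab_group_add \<Rightarrow> 'm) \<Rightarrow> bool" where
  "left_module smul \<longleftrightarrow>
     (\<forall>r a b. smul r (a + b) = smul r a + smul r b) \<and>
     (\<forall>r s a. smul (r + s) a = smul r a + smul s a) \<and>
     (\<forall>r s a. smul (r * s) a = smul r (smul s a)) \<and>
     (\<forall>a. smul 1 a = a)"

definition module_endo :: "('r::ring_1 \<Rightarrow> 'm::ab_group_add \<Rightarrow> 'm) \<Rightarrow> ('m \<Rightarrow> 'm) \<Rightarrow> bool" where
  "module_endo smul \<phi> \<longleftrightarrow>
     (\<forall>a b. \<phi> (a + b) = \<phi> a + \<phi> b) \<and> (\<forall>r a. \<phi> (smul r a) = smul r (\<phi> a))"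

definition nilpotent_map :: "('m::zero \<Rightarrow> 'm) \<Rightarrow> bool" where
  "nilpotent_map \<phi> \<longleftrightarrow> (\<exists>n. \<forall>a. (\<phi> ^^ n) a = 0)"

definition submodule :: "('r::ring_1 \<Rightarrow> 'm::ab_group_add \<Rightarrow> 'm) \<Rightarrow> 'm set \<Rightarrow> bool" where
  "submodule smul N \<longleftrightarrow> 0 \<in> N \<and> (\<forall>a\<in>N. \<forall>b\<in>N. a + b \<in> N) \<and> (\<forall>r. \<forall>a\<in>N. smul r a \<in> N)"

definition cyclic_sub :: "('r::ring_1 \<Rightarrow> 'm::ab_group_add \<Rightarrow> 'm) \<Rightarrow> 'm \<Rightarrow> 'm set" where
  "cyclic_sub smul x = range (\<lambda>r. smul r x)"

definition simple_submodule :: "('r::ring_1 \<Rightarrow> 'm::ab_group_add \<Rightarrow> 'm) \<Rightarrow> 'm set \<Rightarrow> bool" where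
  "simple_submodule smul N \<longleftrightarrow> submodule smul N \<and> N \<noteq> {0} \<and>
     (\<forall>L. submodule smul L \<longrightarrow> L \<subseteq> N \<longrightarrow> L = {0} \<or> L = N)"

definition jidx :: "'g set \<Rightarrow> ('g \<Rightarrow> nat) \<Rightarrow> ('g \<times> nat) set" where
  "jidx \<Gamma> k = {(\<gamma>, i). \<gamma> \<in> \<Gamma> \<and> 1 \<le> i \<and> i \<le> k \<gamma>}"

definition internal_direct_sum ::
  "('r::ring_1 \<Rightarrow> 'm::ab_group_add \<Rightarrow> 'm) \<Rightarrow> 'i set \<Rightarrow> ('i \<Rightarrow> 'm) \<Rightarrow> bool" where
  "internal_direct_sum smul I x \<longleftrightarrow>
     (\<forall>m. \<exists>!y. (\<forall>p. p \<notin> I \<longrightarrow> y p = 0) \<and> finite {p. y p \<noteq> 0} \<and>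
               (\<forall>p\<in>I. y p \<in> cyclic_sub smul (x p)) \<and>
               m = (\<Sum>p\<in>{p. y p \<noteq> 0}. y p))"

definition nilpotent_jordan_base ::
  "('r::ring_1 \<Rightarrow> 'm::ab_group_add \<Rightarrow> 'm) \<Rightarrow> ('m \<Rightarrow> 'm) \<Rightarrow> 'g set \<Rightarrow> ('g \<Rightarrow> nat)
    \<Rightarrow> ('g \<Rightarrow> nat \<Rightarrow> 'm) \<Rightarrow> bool" where
  "nilpotent_jordan_base smul \<phi> \<Gamma> k x \<longleftrightarrow>
     (\<forall>\<gamma>\<in>\<Gamma>. 1 \<le> k \<gamma>) \<and>
     (\<forall>(\<gamma>, i)\<in>jidx \<Gamma> k. simple_submodule smul (cyclic_sub smul (x \<gamma> i))) \<and>
     internal_direct_sum smul (jidx \<Gamma> k) (\<lambda>(\<gamma>, i). x \<gamma> i) \<and>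
     (\<forall>\<gamma>\<in>\<Gamma>. \<forall>i. 1 \<le> i \<and> i < k \<gamma> \<longrightarrow> \<phi> (x \<gamma> i) = x \<gamma> (Suc i)) \<and>
     (\<forall>\<gamma>\<in>\<Gamma>. \<phi> (x \<gamma> (k \<gamma>)) = 0) \<and>
     (\<exists>B. \<forall>\<gamma>\<in>\<Gamma>. k \<gamma> \<le> B)"

definition polys :: "(nat \<Rightarrow> 'r::zero) set" where
  "polys = {f. finite {n. f n \<noteq> 0}}"

definition padd :: "(nat \<Rightarrow> 'r::ring_1) \<Rightarrow> (nat \<Rightarrow> 'r) \<Rightarrow> nat \<Rightarrow> 'r" where
  "padd f g = (\<lambda>n. f n + g n)"

definition pmult :: "(nat \<Rightarrow> 'r::ring_1) \<Rightarrow> (nat \<Rightarrow> 'r) \<Rightarrow> nat \<Rightarrow> 'r" where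
  "pmult f g = (\<lambda>n. \<Sum>i\<le>n. f i * g (n - i))"

definition pmono :: "nat \<Rightarrow> nat \<Rightarrow> 'r::ring_1" where
  "pmono k = (\<lambda>n. if n = k then 1 else 0)"

definition pact :: "('r::ring_1 \<Rightarrow> 'm::ab_group_add \<Rightarrow> 'm) \<Rightarrow> ('m \<Rightarrow> 'm) \<Rightarrow> (nat \<Rightarrow> 'r) \<Rightarrow> 'm \<Rightarrow> 'm" where
  "pact smul \<phi> f u = (\<Sum>n\<in>{n. f n \<noteq> 0}. smul (f n) ((\<phi> ^^ n) u))"

definition left_ideal :: "'r::ring_1 set \<Rightarrow> bool" where
  "left_ideal I \<longleftrightarrow> 0 \<in> I \<and> (\<forall>a\<in>I. \<forall>b\<in>I. a + b \<in> I) \<and> (\<forall>a\<in>I. - a \<in> I) \<and>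
     (\<forall>r. \<forall>a\<in>I. r * a \<in> I)"

definition maximal_left_ideal :: "'r::ring_1 set \<Rightarrow> bool" where
  "maximal_left_ideal I \<longleftrightarrow> left_ideal I \<and> I \<noteq> UNIV \<and>
     (\<forall>L. left_ideal L \<longrightarrow> I \<subseteq> L \<longrightarrow> L = I \<or> L = UNIV)"

definition jacobson :: "'r::ring_1 set" where
  "jacobson = \<Inter> {I. maximal_left_ideal I}"

definition jac_plus_tk :: "nat \<Rightarrow> (nat \<Rightarrow> 'r::ring_1) set" where
  "jac_plus_tk k = {padd a b | a b. a \<in> polys \<and> (\<forall>n. a n \<in> jacobson) \<and>
                                   (\<exists>g\<in>polys. b = pmult g (pmono k))}"

definition dirpower :: "'g set \<Rightarrow> ('g \<Rightarrow> nat \<Rightarrow> 'r::ring_1) set" where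
  "dirpower \<Gamma> = {F. (\<forall>\<gamma>. F \<gamma> \<in> polys) \<and> (\<forall>\<gamma>. \<gamma> \<notin> \<Gamma> \<longrightarrow> F \<gamma> = (\<lambda>_. 0))}"

definition copower :: "'g set \<Rightarrow> ('g \<Rightarrow> nat \<Rightarrow> 'r::ring_1) set" where
  "copower \<Gamma> = {F. F \<in> dirpower \<Gamma> \<and> finite {\<gamma>. F \<gamma> \<noteq> (\<lambda>_. 0)}}"

definition cadd :: "('g \<Rightarrow> nat \<Rightarrow> 'r::ring_1) \<Rightarrow> ('g \<Rightarrow> nat \<Rightarrow> 'r) \<Rightarrow> 'g \<Rightarrow> nat \<Rightarrow> 'r" where
  "cadd F G = (\<lambda>\<gamma>. padd (F \<gamma>) (G \<gamma>))"

definition cmult :: "('g \<Rightarrow> nat \<Rightarrow> 'r::ring_1) \<Rightarrow> ('g \<Rightarrow> nat \<Rightarrow> 'r) \<Rightarrow> 'g \<Rightarrow> nat \<Rightarrow> 'r" where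
  "cmult G F = (\<lambda>\<gamma>. pmult (G \<gamma>) (F \<gamma>))"

definition cscal :: "(nat \<Rightarrow> 'r::ring_1) \<Rightarrow> ('g \<Rightarrow> nat \<Rightarrow> 'r) \<Rightarrow> 'g \<Rightarrow> nat \<Rightarrow> 'r" where
  "cscal h F = (\<lambda>\<gamma>. pmult h (F \<gamma>))"

definition left_ideal_of :: "('g \<Rightarrow> nat \<Rightarrow> 'r::ring_1) set \<Rightarrow> ('g \<Rightarrow> nat \<Rightarrow> 'r) set \<Rightarrow> bool" where
  "left_ideal_of S I \<longleftrightarrow> I \<subseteq> S \<and> (\<lambda>_ _. 0) \<in> I \<and>
     (\<forall>F\<in>I. \<forall>G\<in>I. cadd F G \<in> I) \<and> (\<forall>F\<in>I. (\<lambda>\<gamma> n. - F \<gamma> n) \<in> I) \<and>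
     (\<forall>G\<in>S. \<forall>F\<in>I. cmult G F \<in> I)"

definition Phi :: "('r::ring_1 \<Rightarrow> 'm::ab_group_add \<Rightarrow> 'm) \<Rightarrow> ('m \<Rightarrow> 'm) \<Rightarrow> ('g \<Rightarrow> nat \<Rightarrow> 'm)
    \<Rightarrow> ('g \<Rightarrow> nat \<Rightarrow> 'r) \<Rightarrow> 'm" where
  "Phi smul \<phi> x F = (\<Sum>\<gamma>\<in>{\<gamma>. F \<gamma> \<noteq> (\<lambda>_. 0)}. pact smul \<phi> (F \<gamma>) (x \<gamma> 1))"

definition kerPhi :: "('r::ring_1 \<Rightarrow> 'm::ab_group_add \<Rightarrow> 'm) \<Rightarrow> ('m \<Rightarrow> 'm) \<Rightarrow> 'g set
    \<Rightarrow> ('g \<Rightarrow> nat \<Rightarrow> 'm) \<Rightarrow> ('g \<Rightarrow> nat \<Rightarrow> 'r) set" where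
  "kerPhi smul \<phi> \<Gamma> x = {F \<in> copower \<Gamma>. Phi smul \<phi> x F = 0}"

end

theory Submission
  imports Defs
begin

text \<open>
  Because \<open>\<phi>^n x_{\<gamma>,1}\<close> is \<open>x_{\<gamma>,n+1}\<close> for \<open>n < k_\<gamma>\<close> and \<open>0\<close> otherwise,
  \<open>\<Phi>(f) = \<Sum>_\<gamma> \<Sum>_{n<k_\<gamma>} f_{\<gamma>,n} x_{\<gamma>,n+1}\<close>: the coefficients of \<open>f\<close> below the degrees
  \<open>k_\<gamma>\<close> are the coordinates of \<open>\<Phi>(f)\<close> in \<open>M = \<Oplus> R x_{\<gamma>,i}\<close>. Hence \<open>\<Phi>\<close> is onto, and by
  uniqueness of coordinates \<open>\<Phi>(f) = 0\<close> iff \<open>f_\<gamma>(t) \<ast> x_{\<gamma>,1} = 0\<close> for every \<open>\<gamma>\<close>. Since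
  \<open>(g f) \<ast> u = g \<ast> (f \<ast> u)\<close>, this condition survives left multiplication by arbitrary \<open>g_\<gamma>(t)\<close>,
  so the kernel is a left ideal even of the direct power. Finally \<open>J(R)\<close> annihilates the simple
  modules \<open>R x_{\<gamma>,i}\<close> and multiples of \<open>t^{k_\<gamma>}\<close> have no coefficients below \<open>k_\<gamma>\<close>, so every
  \<open>f_\<gamma>(t) \<in> J(R)[t] + (t^{k_\<gamma>})\<close> kills \<open>x_{\<gamma>,1}\<close>.
\<close>

section \<open>Left modules\<close>

context
  fixes smul :: "'r::ring_1 \<Rightarrow> 'm::ab_group_add \<Rightarrow> 'm"
  assumes M: "left_module smul"
begin

lemma smul_add_right: "smul r (a + b) = smul r a + smul r b"
  using M unfolding left_module_def by blast

lemma smul_add_left: "smul (r + s) a = smul r a + smul s a"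
  using M unfolding left_module_def by blast

lemma smul_mult: "smul (r * s) a = smul r (smul s a)"
  using M unfolding left_module_def by blast

lemma smul_one [simp]: "smul 1 a = a"
  using M unfolding left_module_def by blast

lemma smul_zero_left [simp]: "smul 0 a = 0"
  using smul_add_left[of 0 0 a] by simp

lemma smul_zero_right [simp]: "smul r 0 = 0"
  using smul_add_right[of r 0 0] by simp

lemma smul_minus_left: "smul (- r) a = - smul r a"
  using smul_add_left[of "- r" r a] by (simp add: eq_neg_iff_add_eq_0)

lemma smul_sum_right: "smul r (sum f S) = (\<Sum>i\<in>S. smul r (f i))"
  by (induction S rule: infinite_finite_induct) (auto simp: smul_add_right)

lemma smul_sum_left: "smul (sum f S) a = (\<Sum>i\<in>S. smul (f i) a)"
  by (induction S rule: infinite_finite_induct) (auto simp: smul_add_left)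

lemma submodule_image_left_ideal:
  assumes "left_ideal L"
  shows "submodule smul ((\<lambda>l. smul l v) ` L)"
  unfolding submodule_def
proof (intro conjI ballI allI)
  show "0 \<in> (\<lambda>l. smul l v) ` L"
    using assms smul_zero_left unfolding left_ideal_def by (metis image_eqI)
next
  fix a b assume "a \<in> (\<lambda>l. smul l v) ` L" "b \<in> (\<lambda>l. smul l v) ` L"
  then show "a + b \<in> (\<lambda>l. smul l v) ` L"
    using assms smul_add_left unfolding left_ideal_def by (smt (verit) image_iff)
next
  fix r a assume "a \<in> (\<lambda>l. smul l v) ` L"
  then show "smul r a \<in> (\<lambda>l. smul l v) ` L"
    using assms smul_mult unfolding left_ideal_def by (smt (verit) image_iff)
qed

lemma maximal_left_ideal_annihilator:
  assumes simple: "simple_submodule smul (cyclic_sub smul v)"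
  shows "maximal_left_ideal {r. smul r v = 0}"
proof -
  let ?A = "{r. smul r v = 0}"
  have "left_ideal ?A"
    unfolding left_ideal_def by (auto simp: smul_add_left smul_minus_left smul_mult)
  moreover have "?A \<noteq> UNIV"
  proof
    assume "?A = UNIV"
    then have "smul 1 v = 0" by blast
    then have "v = 0" by simp
    then have "cyclic_sub smul v = {0}" unfolding cyclic_sub_def by auto
    then show False using simple unfolding simple_submodule_def by blast
  qed
  moreover have "L = ?A \<or> L = UNIV" if L: "left_ideal L" and "?A \<subseteq> L" for L
  proof -
    have "(\<lambda>l. smul l v) ` L \<subseteq> cyclic_sub smul v" unfolding cyclic_sub_def by auto
    then consider "(\<lambda>l. smul l v) ` L = {0}" | "(\<lambda>l. smul l v) ` L = cyclic_sub smul v"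
      using simple submodule_image_left_ideal[OF L] unfolding simple_submodule_def by blast
    then show ?thesis
    proof cases
      case 1
      then show ?thesis using \<open>?A \<subseteq> L\<close> by auto
    next
      case 2
      then obtain l where l: "l \<in> L" "smul l v = v"
        unfolding cyclic_sub_def by (metis imageE rangeI smul_one)
      \<comment> \<open>\<open>1 - l\<close> annihilates \<open>v\<close>, so \<open>1 = (1 - l) + l \<in> L\<close>.\<close>
      have "1 - l \<in> L"
        using l \<open>?A \<subseteq> L\<close> smul_add_left[of 1 "- l" v] by (auto simp: smul_minus_left)
      then have "(1 - l) + l \<in> L" using l L unfolding left_ideal_def by blast
      then have "s * 1 \<in> L" for s using L unfolding left_ideal_def by (metis diff_add_cancel)
      then show ?thesis by auto
    qed
  qed
  ultimately show ?thesis unfolding maximal_left_ideal_def by blast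
qed

lemma jacobson_annihilates_simple:
  assumes "simple_submodule smul (cyclic_sub smul v)" and "r \<in> jacobson"
  shows "smul r v = 0"
  using assms maximal_left_ideal_annihilator unfolding jacobson_def by blast

end

lemma module_endo_add: "module_endo smul \<phi> \<Longrightarrow> \<phi> (a + b) = \<phi> a + \<phi> b"
  unfolding module_endo_def by blast

lemma module_endo_smul: "module_endo smul \<phi> \<Longrightarrow> \<phi> (smul r a) = smul r (\<phi> a)"
  unfolding module_endo_def by blast

lemma module_endo_zero: "module_endo smul \<phi> \<Longrightarrow> \<phi> 0 = 0"
  using module_endo_add[of smul \<phi> 0 0] by simp

lemma module_endo_sum: "module_endo smul \<phi> \<Longrightarrow> \<phi> (sum f S) = (\<Sum>i\<in>S. \<phi> (f i))"
  by (induction S rule: infinite_finite_induct) (auto simp: module_endo_zero module_endo_add)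

lemma module_endo_funpow: "module_endo smul \<phi> \<Longrightarrow> module_endo smul (\<phi> ^^ n)"
  by (induction n) (auto simp: module_endo_def)

section \<open>Polynomials as coefficient sequences\<close>

lemma polys_iff_eventually_zero: "f \<in> polys \<longleftrightarrow> (\<exists>N. \<forall>n\<ge>N. f n = 0)"
proof
  assume "f \<in> polys"
  then obtain N where "\<forall>n\<in>{n. f n \<noteq> 0}. n < N"
    unfolding polys_def using finite_nat_set_iff_bounded by blast
  then show "\<exists>N. \<forall>n\<ge>N. f n = 0" by (metis mem_Collect_eq not_less)
next
  assume "\<exists>N. \<forall>n\<ge>N. f n = 0"
  then obtain N where "{n. f n \<noteq> 0} \<subseteq> {..<N}" by (auto simp: not_less[symmetric])
  then show "f \<in> polys" unfolding polys_def using finite_subset by blast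
qed

lemma pmult_eq_0_beyond:
  assumes "\<forall>n\<ge>N1. h n = 0" and "\<forall>n\<ge>N2. f n = 0" and "N1 + N2 \<le> n"
  shows "pmult h f n = 0"
  unfolding pmult_def
proof (intro sum.neutral ballI)
  fix i assume "i \<in> {..n}"
  then have "N1 \<le> i \<or> N2 \<le> n - i" using assms(3) by auto
  then show "h i * f (n - i) = 0" using assms(1,2) by auto
qed

lemma pmult_polys:
  assumes "h \<in> polys" and "f \<in> polys"
  shows "pmult h f \<in> polys"
proof -
  obtain N1 N2 where "\<forall>n\<ge>N1. h n = 0" and "\<forall>n\<ge>N2. f n = 0"
    using assms unfolding polys_iff_eventually_zero by blast
  then have "\<forall>n\<ge>N1 + N2. pmult h f n = 0" using pmult_eq_0_beyond by blast
  then show ?thesis unfolding polys_iff_eventually_zero by blast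
qed

lemma padd_polys:
  assumes "h \<in> polys" and "f \<in> polys"
  shows "padd h f \<in> polys"
proof -
  have "{n. padd h f n \<noteq> 0} \<subseteq> {n. h n \<noteq> 0} \<union> {n. f n \<noteq> 0}" by (auto simp: padd_def)
  then show ?thesis using assms unfolding polys_def by (auto intro: finite_subset)
qed

lemma pmono_polys: "pmono k \<in> polys"
proof -
  have "{n. pmono k n \<noteq> 0} \<subseteq> {k}" by (auto simp: pmono_def)
  then show ?thesis unfolding polys_def using finite_subset by blast
qed

lemma pmult_zero_right [simp]: "pmult h (\<lambda>_. 0) = (\<lambda>_. 0)"
  by (simp add: pmult_def)

lemma pmult_pmono_below: "n < k \<Longrightarrow> pmult g (pmono k) n = 0"
  unfolding pmult_def pmono_def by (intro sum.neutral) auto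

section \<open>The \<open>R[t]\<close>-action induced by \<open>\<phi>\<close>\<close>

lemma pact_zero_left [simp]: "pact smul \<phi> (\<lambda>_. 0) u = 0"
  by (simp add: pact_def)

lemma sum_triangle_eq_square:
  fixes T :: "nat \<Rightarrow> nat \<Rightarrow> 'a::comm_monoid_add"
  assumes "\<And>i j. N \<le> i \<or> N \<le> j \<Longrightarrow> T i j = 0"
  shows "(\<Sum>n<N + N. \<Sum>i\<le>n. T i (n - i)) = (\<Sum>i<N. \<Sum>j<N. T i j)"
proof -
  have "(\<Sum>n<N + N. \<Sum>i\<le>n. T i (n - i)) = (\<Sum>(i, j)\<in>{(i, j). i + j < N + N}. T i j)"
    by (rule sum.triangle_reindex[symmetric])
  also have "\<dots> = (\<Sum>(i, j)\<in>{..<N} \<times> {..<N}. T i j)"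
  proof (rule sum.mono_neutral_right)
    show "finite {(i, j). i + j < N + N}"
      by (rule finite_subset[of _ "{..<N + N} \<times> {..<N + N}"]) auto
    show "\<forall>p\<in>{(i, j). i + j < N + N} - {..<N} \<times> {..<N}. (case p of (i, j) \<Rightarrow> T i j) = 0"
      by (clarsimp simp: not_less intro!: assms)
  qed auto
  also have "\<dots> = (\<Sum>i<N. \<Sum>j<N. T i j)"
    by (rule sum.cartesian_product[symmetric])
  finally show ?thesis .
qed

context
  fixes smul :: "'r::ring_1 \<Rightarrow> 'm::ab_group_add \<Rightarrow> 'm" and \<phi> :: "'m \<Rightarrow> 'm"
  assumes M: "left_module smul"
begin

lemma pact_eq_sum:
  assumes "finite S" and "{n. f n \<noteq> 0} \<subseteq> S"
  shows "pact smul \<phi> f u = (\<Sum>n\<in>S. smul (f n) ((\<phi> ^^ n) u))"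
  unfolding pact_def by (rule sum.mono_neutral_left) (use assms M in auto)

lemma pact_eq_sum_lessThan:
  assumes "\<forall>n\<ge>N. f n = 0"
  shows "pact smul \<phi> f u = (\<Sum>n<N. smul (f n) ((\<phi> ^^ n) u))"
  by (rule pact_eq_sum) (use assms not_less in auto)

lemma pact_padd:
  assumes "f \<in> polys" and "g \<in> polys"
  shows "pact smul \<phi> (padd f g) u = pact smul \<phi> f u + pact smul \<phi> g u"
proof -
  let ?S = "{n. f n \<noteq> 0} \<union> {n. g n \<noteq> 0}"
  have S: "finite ?S" using assms unfolding polys_def by auto
  have "pact smul \<phi> (padd f g) u = (\<Sum>n\<in>?S. smul (padd f g n) ((\<phi> ^^ n) u))"
    by (rule pact_eq_sum[OF S]) (auto simp: padd_def)
  also have "\<dots> = (\<Sum>n\<in>?S. smul (f n) ((\<phi> ^^ n) u)) + (\<Sum>n\<in>?S. smul (g n) ((\<phi> ^^ n) u))"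
    by (simp add: padd_def smul_add_left[OF M] sum.distrib)
  also have "\<dots> = pact smul \<phi> f u + pact smul \<phi> g u"
    using pact_eq_sum[OF S, of f] pact_eq_sum[OF S, of g] by auto
  finally show ?thesis .
qed

lemma pact_uminus: "pact smul \<phi> (\<lambda>n. - f n) u = - pact smul \<phi> f u"
  unfolding pact_def by (simp add: smul_minus_left[OF M] sum_negf)

lemma pact_pmono: "pact smul \<phi> (pmono k) u = (\<phi> ^^ k) u"
proof -
  have "pact smul \<phi> (pmono k) u = (\<Sum>n\<in>{k}. smul (pmono k n) ((\<phi> ^^ n) u))"
    by (rule pact_eq_sum) (auto simp: pmono_def)
  then show ?thesis by (simp add: pmono_def M)
qed

context
  assumes E: "module_endo smul \<phi>"
begin

lemma pact_zero_right [simp]: "pact smul \<phi> f 0 = 0"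
  unfolding pact_def by (simp add: module_endo_zero[OF module_endo_funpow[OF E]] M)

lemma pact_sum: "pact smul \<phi> h (sum g S) = (\<Sum>i\<in>S. pact smul \<phi> h (g i))"
  unfolding pact_def
  by (simp add: module_endo_sum[OF module_endo_funpow[OF E]] smul_sum_right[OF M] sum.swap[of _ S])

lemma pact_pmult:
  assumes h: "h \<in> polys" and f: "f \<in> polys"
  shows "pact smul \<phi> (pmult h f) u = pact smul \<phi> h (pact smul \<phi> f u)"
proof -
  obtain N where hN: "\<forall>n\<ge>N. h n = 0" and fN: "\<forall>n\<ge>N. f n = 0"
    using h f unfolding polys_iff_eventually_zero by (metis le_trans nat_le_linear)
  define T where "T i j = smul (h i) (smul (f j) ((\<phi> ^^ (i + j)) u))" for i j
  have "pact smul \<phi> (pmult h f) u = (\<Sum>n<N + N. smul (pmult h f n) ((\<phi> ^^ n) u))"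
    by (rule pact_eq_sum_lessThan) (use pmult_eq_0_beyond[OF hN fN] in blast)
  also have "\<dots> = (\<Sum>n<N + N. \<Sum>i\<le>n. T i (n - i))"
    unfolding pmult_def T_def by (auto simp: smul_sum_left[OF M] smul_mult[OF M] intro!: sum.cong)
  also have "\<dots> = (\<Sum>i<N. \<Sum>j<N. T i j)"
    by (rule sum_triangle_eq_square) (use hN fN M in \<open>auto simp: T_def\<close>)
  also have "\<dots> = (\<Sum>i<N. smul (h i) ((\<phi> ^^ i) (\<Sum>j<N. smul (f j) ((\<phi> ^^ j) u))))"
    by (simp add: T_def smul_sum_right[OF M] funpow_add
        module_endo_sum[OF module_endo_funpow[OF E]] module_endo_smul[OF module_endo_funpow[OF E]])
  also have "\<dots> = pact smul \<phi> h (pact smul \<phi> f u)"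
    using pact_eq_sum_lessThan[OF hN] pact_eq_sum_lessThan[OF fN] by simp
  finally show ?thesis .
qed

end

end

lemma Phi_eq_sum:
  assumes "finite S" and "{\<gamma>. F \<gamma> \<noteq> (\<lambda>_. 0)} \<subseteq> S"
  shows "Phi smul \<phi> x F = (\<Sum>\<gamma>\<in>S. pact smul \<phi> (F \<gamma>) (x \<gamma> 1))"
  unfolding Phi_def by (rule sum.mono_neutral_left) (use assms in auto)

lemma copowerD:
  assumes "F \<in> copower \<Gamma>"
  shows "finite {\<gamma>. F \<gamma> \<noteq> (\<lambda>_. 0)}" and "F \<gamma> \<in> polys" and "\<gamma> \<notin> \<Gamma> \<Longrightarrow> F \<gamma> = (\<lambda>_. 0)"
  using assms unfolding copower_def dirpower_def by auto

lemma zero_in_copower: "(\<lambda>_ _. 0) \<in> copower \<Gamma>"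
  unfolding copower_def dirpower_def polys_def by auto

lemma cadd_in_copower:
  assumes F: "F \<in> copower \<Gamma>" and G: "G \<in> copower \<Gamma>"
  shows "cadd F G \<in> copower \<Gamma>"
proof -
  have "{\<gamma>. cadd F G \<gamma> \<noteq> (\<lambda>_. 0)} \<subseteq> {\<gamma>. F \<gamma> \<noteq> (\<lambda>_. 0)} \<union> {\<gamma>. G \<gamma> \<noteq> (\<lambda>_. 0)}"
    by (auto simp: cadd_def padd_def)
  then have "finite {\<gamma>. cadd F G \<gamma> \<noteq> (\<lambda>_. 0)}"
    using copowerD(1)[OF F] copowerD(1)[OF G] by (auto intro: finite_subset)
  moreover have "cadd F G \<gamma> \<in> polys" for \<gamma>
    unfolding cadd_def using copowerD(2)[OF F] copowerD(2)[OF G] by (rule padd_polys)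
  moreover have "cadd F G \<gamma> = (\<lambda>_. 0)" if "\<gamma> \<notin> \<Gamma>" for \<gamma>
    using copowerD(3)[OF F that] copowerD(3)[OF G that] by (simp add: cadd_def padd_def)
  ultimately show ?thesis unfolding copower_def dirpower_def by blast
qed

lemma uminus_in_copower:
  assumes "F \<in> copower \<Gamma>"
  shows "(\<lambda>\<gamma> n. - F \<gamma> n) \<in> copower \<Gamma>"
  using assms unfolding copower_def dirpower_def polys_def by (auto simp: fun_eq_iff)

lemma cmult_in_copower:
  assumes "\<forall>\<gamma>. G \<gamma> \<in> polys" and "F \<in> copower \<Gamma>"
  shows "cmult G F \<in> copower \<Gamma>"
proof -
  have "{\<gamma>. cmult G F \<gamma> \<noteq> (\<lambda>_. 0)} \<subseteq> {\<gamma>. F \<gamma> \<noteq> (\<lambda>_. 0)}" by (auto simp: cmult_def)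
  then show ?thesis
    using assms copowerD[OF assms(2)] unfolding copower_def dirpower_def
    by (auto simp: cmult_def pmult_polys intro: finite_subset)
qed

lemma left_ideal_of_subring:
  assumes "left_ideal_of S I" and "I \<subseteq> S'" and "S' \<subseteq> S"
  shows "left_ideal_of S' I"
  using assms unfolding left_ideal_of_def by blast

context
  fixes smul :: "'r::ring_1 \<Rightarrow> 'm::ab_group_add \<Rightarrow> 'm" and \<phi> :: "'m \<Rightarrow> 'm"
  assumes M: "left_module smul"
begin

lemma Phi_cadd:
  assumes F: "F \<in> copower \<Gamma>" and G: "G \<in> copower \<Gamma>"
  shows "Phi smul \<phi> x (cadd F G) = Phi smul \<phi> x F + Phi smul \<phi> x G"
proof -
  let ?S = "{\<gamma>. F \<gamma> \<noteq> (\<lambda>_. 0)} \<union> {\<gamma>. G \<gamma> \<noteq> (\<lambda>_. 0)}"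
  have S: "finite ?S" using copowerD(1)[OF F] copowerD(1)[OF G] by simp
  have "Phi smul \<phi> x (cadd F G) = (\<Sum>\<gamma>\<in>?S. pact smul \<phi> (cadd F G \<gamma>) (x \<gamma> 1))"
    by (rule Phi_eq_sum[OF S]) (auto simp: cadd_def padd_def)
  also have "\<dots> = (\<Sum>\<gamma>\<in>?S. pact smul \<phi> (F \<gamma>) (x \<gamma> 1)) + (\<Sum>\<gamma>\<in>?S. pact smul \<phi> (G \<gamma>) (x \<gamma> 1))"
    by (simp add: cadd_def pact_padd[OF M copowerD(2)[OF F] copowerD(2)[OF G]] sum.distrib)
  also have "\<dots> = Phi smul \<phi> x F + Phi smul \<phi> x G"
    by (simp add: Phi_eq_sum[OF S, of F] Phi_eq_sum[OF S, of G])
  finally show ?thesis .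
qed

lemma Phi_uminus: "Phi smul \<phi> x (\<lambda>\<gamma> n. - F \<gamma> n) = - Phi smul \<phi> x F"
proof -
  have "{\<gamma>. (\<lambda>n. - F \<gamma> n) \<noteq> (\<lambda>_. 0)} = {\<gamma>. F \<gamma> \<noteq> (\<lambda>_. 0)}" by (auto simp: fun_eq_iff)
  then show ?thesis unfolding Phi_def by (simp add: pact_uminus[OF M] sum_negf)
qed

context
  assumes E: "module_endo smul \<phi>"
begin

lemma Phi_cmult:
  assumes G: "\<forall>\<gamma>. G \<gamma> \<in> polys" and F: "F \<in> copower \<Gamma>"
  shows "Phi smul \<phi> x (cmult G F)
           = (\<Sum>\<gamma>\<in>{\<gamma>. F \<gamma> \<noteq> (\<lambda>_. 0)}. pact smul \<phi> (G \<gamma>) (pact smul \<phi> (F \<gamma>) (x \<gamma> 1)))"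
proof -
  have "Phi smul \<phi> x (cmult G F)
          = (\<Sum>\<gamma>\<in>{\<gamma>. F \<gamma> \<noteq> (\<lambda>_. 0)}. pact smul \<phi> (cmult G F \<gamma>) (x \<gamma> 1))"
    by (rule Phi_eq_sum[OF copowerD(1)[OF F]]) (auto simp: cmult_def)
  then show ?thesis
    by (simp add: cmult_def pact_pmult[OF M E G[rule_format] copowerD(2)[OF F]])
qed

lemma Phi_cscal:
  assumes h: "h \<in> polys" and F: "F \<in> copower \<Gamma>"
  shows "Phi smul \<phi> x (cscal h F) = pact smul \<phi> h (Phi smul \<phi> x F)"
proof -
  have "Phi smul \<phi> x (cscal h F) = Phi smul \<phi> x (cmult (\<lambda>_. h) F)"
    by (simp add: cscal_def cmult_def)
  also have "\<dots> = (\<Sum>\<gamma>\<in>{\<gamma>. F \<gamma> \<noteq> (\<lambda>_. 0)}. pact smul \<phi> h (pact smul \<phi> (F \<gamma>) (x \<gamma> 1)))"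
    using h by (intro Phi_cmult[OF _ F]) auto
  also have "\<dots> = pact smul \<phi> h (Phi smul \<phi> x F)"
    unfolding Phi_def by (rule pact_sum[OF M E, symmetric])
  finally show ?thesis .
qed

end

end

section \<open>\<open>\<Phi>\<close> and the Jordan base\<close>

text \<open>The \<open>(\<gamma>, i)\<close>-component of \<open>\<Phi>(F)\<close> in the direct sum \<open>\<Oplus> R x_{\<gamma>,i}\<close>.\<close>

definition jordan_coords ::
    "('r::ring_1 \<Rightarrow> 'm::ab_group_add \<Rightarrow> 'm) \<Rightarrow> 'g set \<Rightarrow> ('g \<Rightarrow> nat) \<Rightarrow> ('g \<Rightarrow> nat \<Rightarrow> 'm)
      \<Rightarrow> ('g \<Rightarrow> nat \<Rightarrow> 'r) \<Rightarrow> 'g \<times> nat \<Rightarrow> 'm" where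
  "jordan_coords smul \<Gamma> k x F =
     (\<lambda>(\<gamma>, i). if (\<gamma>, i) \<in> jidx \<Gamma> k then smul (F \<gamma> (i - 1)) (x \<gamma> i) else 0)"

lemma internal_direct_sum_eq_zero:
  assumes M: "left_module smul" and D: "internal_direct_sum smul I x"
    and y: "\<forall>p. p \<notin> I \<longrightarrow> y p = 0" "finite {p. y p \<noteq> 0}"
      "\<forall>p\<in>I. y p \<in> cyclic_sub smul (x p)" "(\<Sum>p\<in>{p. y p \<noteq> 0}. y p) = 0"
  shows "y = (\<lambda>_. 0)"
proof -
  let ?rep = "\<lambda>y. (\<forall>p. p \<notin> I \<longrightarrow> y p = 0) \<and> finite {p. y p \<noteq> 0} \<and>
                 (\<forall>p\<in>I. y p \<in> cyclic_sub smul (x p)) \<and> 0 = (\<Sum>p\<in>{p. y p \<noteq> 0}. y p)"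
  have unique: "\<exists>!y. ?rep y" using D unfolding internal_direct_sum_def by (rule spec)
  have "0 \<in> cyclic_sub smul (x p)" for p
    unfolding cyclic_sub_def by (rule range_eqI[where x = 0]) (simp add: M)
  then have "(THE y. ?rep y) = (\<lambda>_. 0)" by (intro the1_equality[OF unique]) simp
  moreover have "(THE y. ?rep y) = y" using y by (intro the1_equality[OF unique]) simp
  ultimately show ?thesis by simp
qed

context
  fixes smul :: "'r::ring_1 \<Rightarrow> 'm::ab_group_add \<Rightarrow> 'm" and \<phi> :: "'m \<Rightarrow> 'm"
    and \<Gamma> :: "'g set" and k :: "'g \<Rightarrow> nat" and x :: "'g \<Rightarrow> nat \<Rightarrow> 'm"
  assumes M: "left_module smul"
    and E: "module_endo smul \<phi>"
    and J: "nilpotent_jordan_base smul \<phi> \<Gamma> k x"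
begin

lemma funpow_jordan_generator:
  assumes "\<gamma> \<in> \<Gamma>"
  shows "n < k \<gamma> \<Longrightarrow> (\<phi> ^^ n) (x \<gamma> 1) = x \<gamma> (Suc n)"
proof (induction n)
  case (Suc n)
  then show ?case using J assms unfolding nilpotent_jordan_base_def by auto
qed simp

lemma funpow_jordan_generator_vanish:
  assumes \<gamma>: "\<gamma> \<in> \<Gamma>" and n: "k \<gamma> \<le> n"
  shows "(\<phi> ^^ n) (x \<gamma> 1) = 0"
proof -
  have "1 \<le> k \<gamma>" using J \<gamma> unfolding nilpotent_jordan_base_def by blast
  then have "(\<phi> ^^ k \<gamma>) (x \<gamma> 1) = \<phi> ((\<phi> ^^ (k \<gamma> - 1)) (x \<gamma> 1))"
    by (metis Suc_diff_1 funpow.simps(2) less_le_trans o_apply zero_less_one)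
  also have "\<dots> = \<phi> (x \<gamma> (k \<gamma>))"
    using funpow_jordan_generator[OF \<gamma>, of "k \<gamma> - 1"] \<open>1 \<le> k \<gamma>\<close> by simp
  also have "\<dots> = 0" using J \<gamma> unfolding nilpotent_jordan_base_def by blast
  finally have "(\<phi> ^^ (n - k \<gamma>)) ((\<phi> ^^ k \<gamma>) (x \<gamma> 1)) = 0"
    using module_endo_zero[OF module_endo_funpow[OF E]] by simp
  then show ?thesis using n by (metis funpow_add le_add_diff_inverse2 o_apply)
qed

lemma pact_jordan_generator:
  assumes \<gamma>: "\<gamma> \<in> \<Gamma>" and f: "f \<in> polys"
  shows "pact smul \<phi> f (x \<gamma> 1) = (\<Sum>n<k \<gamma>. smul (f n) (x \<gamma> (Suc n)))"
proof -
  let ?S = "{n. f n \<noteq> 0} \<union> {..<k \<gamma>}"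
  have S: "finite ?S" using f unfolding polys_def by auto
  have "pact smul \<phi> f (x \<gamma> 1) = (\<Sum>n\<in>?S. smul (f n) ((\<phi> ^^ n) (x \<gamma> 1)))"
    by (rule pact_eq_sum[OF M S]) auto
  also have "\<dots> = (\<Sum>n<k \<gamma>. smul (f n) ((\<phi> ^^ n) (x \<gamma> 1)))"
  proof (rule sum.mono_neutral_right[OF S])
    show "\<forall>n\<in>?S - {..<k \<gamma>}. smul (f n) ((\<phi> ^^ n) (x \<gamma> 1)) = 0"
      using funpow_jordan_generator_vanish[OF \<gamma>] smul_zero_right[OF M] by (metis DiffD2 lessThan_iff not_less)
  qed auto
  also have "\<dots> = (\<Sum>n<k \<gamma>. smul (f n) (x \<gamma> (Suc n)))"
    using funpow_jordan_generator[OF \<gamma>] by (intro sum.cong) auto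
  finally show ?thesis .
qed

lemma pact_jordan_generator_coords:
  assumes \<gamma>: "\<gamma> \<in> \<Gamma>" and F: "F \<gamma> \<in> polys"
  shows "pact smul \<phi> (F \<gamma>) (x \<gamma> 1) = (\<Sum>n<k \<gamma>. jordan_coords smul \<Gamma> k x F (\<gamma>, Suc n))"
  unfolding pact_jordan_generator[OF assms] using \<gamma>
  by (intro sum.cong) (auto simp: jordan_coords_def jidx_def)

lemma jordan_coords_support:
  "{p. jordan_coords smul \<Gamma> k x F p \<noteq> 0}
     \<subseteq> (\<lambda>(\<gamma>, n). (\<gamma>, Suc n)) ` Sigma {\<gamma>. F \<gamma> \<noteq> (\<lambda>_. 0)} (\<lambda>\<gamma>. {..<k \<gamma>})"
proof clarify
  fix \<gamma> i assume nz: "jordan_coords smul \<Gamma> k x F (\<gamma>, i) \<noteq> 0"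
  then have i: "1 \<le> i" "i \<le> k \<gamma>" and "F \<gamma> \<noteq> (\<lambda>_. 0)"
    by (auto simp: jordan_coords_def jidx_def M split: if_splits)
  then have "(\<gamma>, i - 1) \<in> Sigma {\<gamma>. F \<gamma> \<noteq> (\<lambda>_. 0)} (\<lambda>\<gamma>. {..<k \<gamma>})" by auto
  moreover have "(\<gamma>, i) = (\<lambda>(\<gamma>, n). (\<gamma>, Suc n)) (\<gamma>, i - 1)" using i by simp
  ultimately show "(\<gamma>, i) \<in> (\<lambda>(\<gamma>, n). (\<gamma>, Suc n)) ` Sigma {\<gamma>. F \<gamma> \<noteq> (\<lambda>_. 0)} (\<lambda>\<gamma>. {..<k \<gamma>})"
    by (rule rev_image_eqI)
qed

lemma Phi_eq_sum_jordan_coords: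
  assumes F: "F \<in> copower \<Gamma>"
  shows "finite {p. jordan_coords smul \<Gamma> k x F p \<noteq> 0}"
    and "Phi smul \<phi> x F = (\<Sum>p\<in>{p. jordan_coords smul \<Gamma> k x F p \<noteq> 0}. jordan_coords smul \<Gamma> k x F p)"
proof -
  let ?c = "jordan_coords smul \<Gamma> k x F" and ?A = "{\<gamma>. F \<gamma> \<noteq> (\<lambda>_. 0)}"
  let ?g = "\<lambda>(\<gamma>, n). (\<gamma>, Suc n)" and ?Sg = "Sigma ?A (\<lambda>\<gamma>. {..<k \<gamma>})"
  have A: "finite ?A" and A_sub: "?A \<subseteq> \<Gamma>" using copowerD[OF F] by auto
  then have Sg: "finite (?g ` ?Sg)" by simp
  then show fin: "finite {p. ?c p \<noteq> 0}" using jordan_coords_support by (rule finite_subset[rotated])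
  have "Phi smul \<phi> x F = (\<Sum>\<gamma>\<in>?A. \<Sum>n<k \<gamma>. ?c (\<gamma>, Suc n))"
    unfolding Phi_def using A_sub pact_jordan_generator_coords copowerD(2)[OF F]
    by (intro sum.cong) auto
  also have "\<dots> = (\<Sum>q\<in>?Sg. ?c (?g q))"
    by (subst sum.Sigma) (use A in \<open>auto simp: split_beta\<close>)
  also have "\<dots> = (\<Sum>p\<in>?g ` ?Sg. ?c p)"
    by (auto simp: sum.reindex inj_on_def intro!: sum.cong)
  also have "\<dots> = (\<Sum>p\<in>{p. ?c p \<noteq> 0}. ?c p)"
    by (rule sum.mono_neutral_right[OF Sg jordan_coords_support]) auto
  finally show "Phi smul \<phi> x F = (\<Sum>p\<in>{p. ?c p \<noteq> 0}. ?c p)" .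
qed

lemma kerPhi_pact_generator:
  assumes "F \<in> kerPhi smul \<phi> \<Gamma> x"
  shows "pact smul \<phi> (F \<gamma>) (x \<gamma> 1) = 0"
proof -
  have F: "F \<in> copower \<Gamma>" and Phi: "Phi smul \<phi> x F = 0"
    using assms unfolding kerPhi_def by auto
  have "jordan_coords smul \<Gamma> k x F = (\<lambda>_. 0)"
  proof (rule internal_direct_sum_eq_zero[OF M])
    show "internal_direct_sum smul (jidx \<Gamma> k) (\<lambda>(\<gamma>, i). x \<gamma> i)"
      using J unfolding nilpotent_jordan_base_def by blast
  qed (use Phi_eq_sum_jordan_coords[OF F] Phi in \<open>auto simp: jordan_coords_def cyclic_sub_def\<close>)
  then show ?thesis
    using pact_jordan_generator_coords copowerD[OF F] by (cases "\<gamma> \<in> \<Gamma>") auto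
qed

lemma Phi_surj: "\<exists>F\<in>copower \<Gamma>. Phi smul \<phi> x F = m"
proof -
  let ?I = "jidx \<Gamma> k"
  obtain y where y_out: "\<forall>p. p \<notin> ?I \<longrightarrow> y p = 0" and y_fin: "finite {p. y p \<noteq> 0}"
    and y_cyc: "\<forall>p\<in>?I. y p \<in> cyclic_sub smul ((\<lambda>(\<gamma>, i). x \<gamma> i) p)"
    and m: "m = (\<Sum>p\<in>{p. y p \<noteq> 0}. y p)"
    using J unfolding nilpotent_jordan_base_def internal_direct_sum_def by blast
  have "\<forall>p\<in>?I. \<exists>r. y p = smul r (x (fst p) (snd p))"
    using y_cyc unfolding cyclic_sub_def by (auto simp: split_beta)
  then obtain r where r: "\<And>p. p \<in> ?I \<Longrightarrow> y p = smul (r p) (x (fst p) (snd p))"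
    by metis
  \<comment> \<open>Read off \<open>F\<close> from the coordinates of \<open>m\<close>: \<open>F_{\<gamma>,n}\<close> is the coefficient of \<open>x_{\<gamma>,n+1}\<close>.\<close>
  define F where "F \<gamma> n = (if y (\<gamma>, Suc n) = 0 then 0 else r (\<gamma>, Suc n))" for \<gamma> n
  have F_supp: "F \<gamma> n \<noteq> 0 \<Longrightarrow> (\<gamma>, Suc n) \<in> {p. y p \<noteq> 0}" for \<gamma> n
    by (auto simp: F_def split: if_splits)
  have "F \<gamma> \<in> polys" for \<gamma>
  proof -
    have "{n. F \<gamma> n \<noteq> 0} \<subseteq> (\<lambda>p. snd p - 1) ` {p. y p \<noteq> 0}" using F_supp by force
    then show ?thesis unfolding polys_def using y_fin finite_subset by blast
  qed
  moreover have "{\<gamma>. F \<gamma> \<noteq> (\<lambda>_. 0)} \<subseteq> fst ` {p. y p \<noteq> 0}" using F_supp by force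
  moreover have "F \<gamma> = (\<lambda>_. 0)" if "\<gamma> \<notin> \<Gamma>" for \<gamma>
    using y_out that by (auto simp: F_def jidx_def)
  ultimately have F: "F \<in> copower \<Gamma>"
    unfolding copower_def dirpower_def using y_fin finite_subset by blast
  have "jordan_coords smul \<Gamma> k x F = y"
  proof
    fix p :: "'g \<times> nat"
    obtain \<gamma> i where p: "p = (\<gamma>, i)" by fastforce
    show "jordan_coords smul \<Gamma> k x F p = y p"
    proof (cases "p \<in> ?I")
      case True
      then have "Suc (i - 1) = i" using p by (auto simp: jidx_def)
      then show ?thesis using True r[OF True] p by (auto simp: jordan_coords_def F_def M)
    qed (use y_out p in \<open>auto simp: jordan_coords_def\<close>)
  qed
  then have "Phi smul \<phi> x F = m" using Phi_eq_sum_jordan_coords(2)[OF F] m by simp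
  then show ?thesis using F by blast
qed

lemma pact_jac_plus_tk_generator:
  assumes \<gamma>: "\<gamma> \<in> \<Gamma>" and f: "f \<in> jac_plus_tk (k \<gamma>)"
  shows "pact smul \<phi> f (x \<gamma> 1) = 0"
proof -
  obtain a g where f_eq: "f = padd a (pmult g (pmono (k \<gamma>)))" and a: "a \<in> polys" "\<forall>n. a n \<in> jacobson"
    and g: "g \<in> polys"
    using f unfolding jac_plus_tk_def by blast
  have "f \<in> polys" unfolding f_eq using a g by (intro padd_polys pmult_polys pmono_polys)
  then have "pact smul \<phi> f (x \<gamma> 1) = (\<Sum>n<k \<gamma>. smul (f n) (x \<gamma> (Suc n)))"
    by (rule pact_jordan_generator[OF \<gamma>])
  also have "\<dots> = 0"
  proof (rule sum.neutral, rule ballI)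
    fix n assume n: "n \<in> {..<k \<gamma>}"
    \<comment> \<open>Below degree \<open>k_\<gamma>\<close> only the \<open>J(R)\<close>-part contributes, and \<open>J(R)\<close> kills the simple \<open>R x_{\<gamma>,n+1}\<close>.\<close>
    then have "f n = a n" by (simp add: f_eq padd_def pmult_pmono_below)
    moreover have "simple_submodule smul (cyclic_sub smul (x \<gamma> (Suc n)))"
      using J \<gamma> n unfolding nilpotent_jordan_base_def jidx_def by auto
    ultimately show "smul (f n) (x \<gamma> (Suc n)) = 0"
      using jacobson_annihilates_simple[OF M] a(2) by metis
  qed
  finally show ?thesis .
qed

lemma jac_plus_tk_subset_kerPhi:
  "{F \<in> copower \<Gamma>. \<forall>\<gamma>\<in>\<Gamma>. F \<gamma> \<in> jac_plus_tk (k \<gamma>)} \<subseteq> kerPhi smul \<phi> \<Gamma> x"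
proof clarify
  fix F :: "'g \<Rightarrow> nat \<Rightarrow> 'r"
  assume F: "F \<in> copower \<Gamma>" and jac: "\<forall>\<gamma>\<in>\<Gamma>. F \<gamma> \<in> jac_plus_tk (k \<gamma>)"
  have "pact smul \<phi> (F \<gamma>) (x \<gamma> 1) = 0" if "F \<gamma> \<noteq> (\<lambda>_. 0)" for \<gamma>
    using that copowerD(3)[OF F] jac pact_jac_plus_tk_generator by blast
  then have "Phi smul \<phi> x F = 0" unfolding Phi_def by simp
  then show "F \<in> kerPhi smul \<phi> \<Gamma> x" using F unfolding kerPhi_def by simp
qed

lemma kerPhi_left_ideal: "left_ideal_of (dirpower \<Gamma>) (kerPhi smul \<phi> \<Gamma> x)"
  unfolding left_ideal_of_def
proof (intro conjI ballI)
  show "kerPhi smul \<phi> \<Gamma> x \<subseteq> dirpower \<Gamma>" unfolding kerPhi_def copower_def by auto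
  show "(\<lambda>_ _. 0) \<in> kerPhi smul \<phi> \<Gamma> x"
    unfolding kerPhi_def Phi_def using zero_in_copower by simp
next
  fix F G assume "F \<in> kerPhi smul \<phi> \<Gamma> x" and "G \<in> kerPhi smul \<phi> \<Gamma> x"
  then show "cadd F G \<in> kerPhi smul \<phi> \<Gamma> x"
    unfolding kerPhi_def by (auto simp: cadd_in_copower Phi_cadd[OF M])
next
  fix F assume "F \<in> kerPhi smul \<phi> \<Gamma> x"
  then show "(\<lambda>\<gamma> n. - F \<gamma> n) \<in> kerPhi smul \<phi> \<Gamma> x"
    unfolding kerPhi_def by (simp add: uminus_in_copower Phi_uminus[OF M])
next
  fix G F :: "'g \<Rightarrow> nat \<Rightarrow> 'r"
  assume G: "G \<in> dirpower \<Gamma>" and F: "F \<in> kerPhi smul \<phi> \<Gamma> x"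
  then have G_polys: "\<forall>\<gamma>. G \<gamma> \<in> polys" and F_cop: "F \<in> copower \<Gamma>"
    unfolding dirpower_def kerPhi_def by auto
  have "Phi smul \<phi> x (cmult G F) = 0"
    using Phi_cmult[OF M E G_polys F_cop] kerPhi_pact_generator[OF F] pact_zero_right[OF M E] by simp
  then show "cmult G F \<in> kerPhi smul \<phi> \<Gamma> x"
    unfolding kerPhi_def using cmult_in_copower[OF G_polys F_cop] by simp
qed

end

theorem theorem3p1:
  fixes smul :: "'r::ring_1 \<Rightarrow> 'm::ab_group_add \<Rightarrow> 'm"
    and \<phi> :: "'m \<Rightarrow> 'm"
    and \<Gamma> :: "'g set" and k :: "'g \<Rightarrow> nat" and x :: "'g \<Rightarrow> nat \<Rightarrow> 'm"
  assumes "left_module smul"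
    and "module_endo smul \<phi>"
    and "nilpotent_map \<phi>"
    and "nilpotent_jordan_base smul \<phi> \<Gamma> k x"
  shows "(\<forall>F\<in>copower \<Gamma>. \<forall>G\<in>copower \<Gamma>.
            Phi smul \<phi> x (cadd F G) = Phi smul \<phi> x F + Phi smul \<phi> x G)
       \<and> (\<forall>h\<in>polys. \<forall>F\<in>copower \<Gamma>.
            Phi smul \<phi> x (cscal h F) = pact smul \<phi> h (Phi smul \<phi> x F))
       \<and> (\<forall>m. \<exists>F\<in>copower \<Gamma>. Phi smul \<phi> x F = m)
       \<and> (\<forall>F\<in>copower \<Gamma>. \<phi> (Phi smul \<phi> x F) = Phi smul \<phi> x (cscal (pmono 1) F))
       \<and> {F \<in> copower \<Gamma>. \<forall>\<gamma>\<in>\<Gamma>. F \<gamma> \<in> jac_plus_tk (k \<gamma>)} \<subseteq> kerPhi smul \<phi> \<Gamma> x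
       \<and> left_ideal_of (dirpower \<Gamma>) (kerPhi smul \<phi> \<Gamma> x)
       \<and> left_ideal_of (copower \<Gamma>) (kerPhi smul \<phi> \<Gamma> x)"
proof -
  note M = assms(1) and E = assms(2) and J = assms(4)
  have shift: "\<phi> (Phi smul \<phi> x F) = Phi smul \<phi> x (cscal (pmono 1) F)" if "F \<in> copower \<Gamma>" for F
    using Phi_cscal[OF M E pmono_polys that] pact_pmono[OF M, of \<phi> 1] by simp
  have "left_ideal_of (copower \<Gamma>) (kerPhi smul \<phi> \<Gamma> x)"
    using kerPhi_left_ideal[OF M E J] by (rule left_ideal_of_subring) (auto simp: kerPhi_def copower_def)
  then show ?thesis
    using Phi_cadd[OF M] Phi_cscal[OF M E] Phi_surj[OF M E J] shift
      jac_plus_tk_subset_kerPhi[OF M E J] kerPhi_left_ideal[OF M E J]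
    by blast
qed

end
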